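(* Let $I=[a,b)\subseteq[0,1)$ with $a<b$, let $r$ be uniformly distributed on $[a,b)$, and let $\tilde x^n$ be obtained from $r$ by the rule: $\hat x^n=\min\{y^n:F_I(y^n)>r\}$ (in Gray order); $\tilde x^n=\hat x^n+1$ if $r\ge\bar F_I(\hat x^n)$ and $\hat x^n$ is not the largest element in Gray order; otherwise $\tilde x^n=\hat x^n$. Then $$\mathbb{E}\big[\lambda_h(\tilde x^n)\big]>nH(X)-1-2\log_2\rho,$$ where $H(X)=-p(0)\log_2p(0)-p(1)\log_2p(1)$.
   Context: Let $p$ be a probability distribution on $\{0,1\}$ with $p(0),p(1)\in(0,1)$, $p(0)\ne p(1)$, $\rho=\max\{p(0)/p(1),p(1)/p(0)\}$, and $p(x^n)=\prod_i p(x_i)$. Gray code is $g(x^n)=x^n\oplus(0,x_1,\dots,x_{n-1})$; Gray order $\preceq_G$ on $\{0,1\}^n$ is $x^n\preceq_G y^n$ iff $g^{-1}(x^n)\preceq_L g^{-1}(y^n)$ (lexicographic). $x^n+1$ and $x^n-1$ denote the immediate successor and predecessor in Gray order. $F(x^n)=\sum_{a^n\preceq_G x^n}p(a^n)$, with $F(x^n-1):=0$ if $x^n$ is the smallest element. For $I=[a,b)$: $F_I(x^n)=a+(b-a)F(x^n)$; $\alpha_h:=\rho$; $\lambda_h(x^n)=\lfloor-\log_2(\alpha_h(b-a)p(x^n))\rfloor$; $\bar F_I(x^n)=\lfloor F_I(x^n-1)+2^{-\lambda_h(x^n)}\rfloor_{\lambda_h(x^n)}$, where $\lfloor r\rfloor_l=2^{-l}\lfloor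 2^lr\rfloor$ for real $r\ge0$ and integer $l$. *)

theory Defs
  imports "HOL-Probability.Probability"
begin

text \<open>Binary alphabet {0,1} is rendered as bool (False = 0, True = 1);
  a sequence x^n is a bool list of length n, x_1 being the head.\<close>

definition prob :: "(bool \<Rightarrow> real) \<Rightarrow> bool list \<Rightarrow> real" where
  "prob p xs = prod_list (map p xs)"

definition rho :: "(bool \<Rightarrow> real) \<Rightarrow> real" where
  "rho p = max (p False / p True) (p True / p False)"

definition entropy :: "(bool \<Rightarrow> real) \<Rightarrow> real" where
  "entropy p = - p False * log 2 (p False) - p True * log 2 (p True)"

definition gray :: "bool list \<Rightarrow> bool list" where
  "gray xs = map2 (\<lambda>u v. u \<noteq> v) xs (False # xs)"

definition gray_inv :: "nat \<Rightarrow> bool list \<Rightarrow> bool list" where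
  "gray_inv n = the_inv_into {xs. length xs = n} gray"

definition gray_le :: "nat \<Rightarrow> bool list \<Rightarrow> bool list \<Rightarrow> bool" where
  "gray_le n x y \<longleftrightarrow> ord_class.lexordp_eq (gray_inv n x) (gray_inv n y)"

definition gray_lt :: "nat \<Rightarrow> bool list \<Rightarrow> bool list \<Rightarrow> bool" where
  "gray_lt n x y \<longleftrightarrow> ord_class.lexordp (gray_inv n x) (gray_inv n y)"

definition gray_succ :: "nat \<Rightarrow> bool list \<Rightarrow> bool list" where
  "gray_succ n x = (THE y. length y = n \<and> gray_lt n x y \<and>
      (\<forall>z. length z = n \<and> gray_lt n x z \<longrightarrow> gray_le n y z))"

definition gray_is_max :: "nat \<Rightarrow> bool list \<Rightarrow> bool" where
  "gray_is_max n x \<longleftrightarrow> (\<forall>y. length y = n \<longrightarrow> gray_le n y x)"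

text \<open>F(x^n), and F(x^n - 1) (= sum over strict Gray predecessors; 0 for the smallest element).\<close>
definition cdf :: "(bool \<Rightarrow> real) \<Rightarrow> nat \<Rightarrow> bool list \<Rightarrow> real" where
  "cdf p n x = (\<Sum>c\<in>{c. length c = n \<and> gray_le n c x}. prob p c)"

definition cdf_prev :: "(bool \<Rightarrow> real) \<Rightarrow> nat \<Rightarrow> bool list \<Rightarrow> real" where
  "cdf_prev p n x = (\<Sum>c\<in>{c. length c = n \<and> gray_lt n c x}. prob p c)"

definition FI :: "(bool \<Rightarrow> real) \<Rightarrow> nat \<Rightarrow> real \<Rightarrow> real \<Rightarrow> bool list \<Rightarrow> real" where
  "FI p n a b x = a + (b - a) * cdf p n x"

definition FI_prev :: "(bool \<Rightarrow> real) \<Rightarrow> nat \<Rightarrow> real \<Rightarrow> real \<Rightarrow> bool list \<Rightarrow> real" where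
  "FI_prev p n a b x = a + (b - a) * cdf_prev p n x"

text \<open>lambda_h with alpha_h = rho.\<close>
definition lam :: "(bool \<Rightarrow> real) \<Rightarrow> real \<Rightarrow> real \<Rightarrow> bool list \<Rightarrow> int" where
  "lam p a b x = \<lfloor>- log 2 (rho p * (b - a) * prob p x)\<rfloor>"

definition floor_l :: "real \<Rightarrow> int \<Rightarrow> real" where
  "floor_l r l = 2 powr (- real_of_int l) * \<lfloor>2 powr (real_of_int l) * r\<rfloor>"

definition Fbar :: "(bool \<Rightarrow> real) \<Rightarrow> nat \<Rightarrow> real \<Rightarrow> real \<Rightarrow> bool list \<Rightarrow> real" where
  "Fbar p n a b x = floor_l (FI_prev p n a b x + 2 powr (- real_of_int (lam p a b x))) (lam p a b x)"

definition xhat :: "(bool \<Rightarrow> real) \<Rightarrow> nat \<Rightarrow> real \<Rightarrow> real \<Rightarrow> real \<Rightarrow> bool list" where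
  "xhat p n a b r = (THE y. length y = n \<and> FI p n a b y > r \<and>
      (\<forall>z. length z = n \<and> FI p n a b z > r \<longrightarrow> gray_le n y z))"

definition xtilde :: "(bool \<Rightarrow> real) \<Rightarrow> nat \<Rightarrow> real \<Rightarrow> real \<Rightarrow> real \<Rightarrow> bool list" where
  "xtilde p n a b r = (let x = xhat p n a b r in
      if r \<ge> Fbar p n a b x \<and> \<not> gray_is_max n x then gray_succ n x else x)"

end

theory Submission
  imports Defs
begin

text \<open>The interval \<open>[a, b)\<close> splits into the cells \<open>[F\<^sub>I(x - 1), F\<^sub>I(x))\<close>; the cell of \<open>x\<close>
  has probability \<open>p(x)\<close>, and on it the decoder outputs \<open>x\<close> or its Gray successor. Consecutive
  words in Gray order differ in exactly one bit, so their probabilities differ by a factor of at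
  most \<open>\<rho>\<close>, and on the cell of \<open>x\<close> the code length is at least
  \<open>\<lfloor>-log\<^sub>2(\<rho>\<^sup>2 (b - a) p(x))\<rfloor> > -log\<^sub>2 p(x) - 2 log\<^sub>2 \<rho> - log\<^sub>2(b - a) - 1\<close>.
  Averaging over \<open>x\<close> gives \<open>n H(X) - 2 log\<^sub>2 \<rho> - log\<^sub>2(b - a) - 1\<close>, and \<open>b - a \<le> 1\<close>.\<close>

definition words :: "nat \<Rightarrow> bool list set" where
  "words n = {xs. length xs = n}"

lemma finite_words [simp]: "finite (words n)"
  unfolding words_def using finite_lists_length_eq[of "UNIV :: bool set" n] by simp

lemma words_nonempty: "words n \<noteq> {}"
  unfolding words_def by (auto intro: exI[of _ "replicate n False"])

lemma words_Suc: "words (Suc n) = (Cons False) ` words n \<union> (Cons True) ` words n"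
proof -
  have "xs \<in> (Cons False) ` words n \<union> (Cons True) ` words n" if "xs \<in> words (Suc n)" for xs
  proof -
    from that obtain c ys where "xs = c # ys" "ys \<in> words n"
      by (auto simp: words_def length_Suc_conv)
    then show ?thesis by (cases c) auto
  qed
  then show ?thesis by (auto simp: words_def)
qed

lemma sum_words_Suc:
  "sum f (words (Suc n)) = (\<Sum>xs\<in>words n. f (False # xs)) + (\<Sum>xs\<in>words n. f (True # xs))"
  unfolding words_Suc by (subst sum.union_disjoint) (auto simp: sum.reindex)

section \<open>Gray code\<close>

text \<open>\<open>gray_from c xs\<close> is the Gray code of \<open>xs\<close> when the bit preceding \<open>xs\<close> is \<open>c\<close>.\<close>

fun gray_from :: "bool \<Rightarrow> bool list \<Rightarrow> bool list" where
  "gray_from c [] = []"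
| "gray_from c (x # xs) = (x \<noteq> c) # gray_from x xs"

lemma gray_eq_gray_from: "gray xs = gray_from False xs"
proof -
  have "map2 (\<lambda>u v. u \<noteq> v) xs (c # xs) = gray_from c xs" for c
    by (induction xs arbitrary: c) auto
  then show ?thesis unfolding gray_def .
qed

lemma length_gray_from [simp]: "length (gray_from c xs) = length xs"
  by (induction xs arbitrary: c) auto

lemma gray_from_inj:
  "gray_from c xs = gray_from c ys \<Longrightarrow> length xs = length ys \<Longrightarrow> xs = ys"
proof (induction xs arbitrary: c ys)
  case (Cons x xs)
  then obtain y ys' where "ys = y # ys'" by (cases ys) auto
  with Cons show ?case by (cases "x = y") auto
qed simp

lemma gray_from_append: "gray_from c (w @ s) = gray_from c w @ gray_from (last (c # w)) s"
  by (induction w arbitrary: c) auto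

lemma gray_from_replicate_same: "gray_from c (replicate k c) = replicate k False"
  by (induction k) auto

lemma gray_from_replicate_swap:
  "gray_from False (replicate k True) = gray_from True (replicate k False)"
  by (cases k) (simp_all add: gray_from_replicate_same)

lemma length_gray [simp]: "length (gray xs) = length xs"
  by (simp add: gray_eq_gray_from)

lemma bij_betw_gray: "bij_betw gray (words n) (words n)"
proof -
  have inj: "inj_on gray (words n)"
    by (auto simp: inj_on_def gray_eq_gray_from words_def intro: gray_from_inj)
  moreover have "gray ` words n \<subseteq> words n" by (auto simp: words_def)
  ultimately have "gray ` words n = words n"
    by (metis card_image card_subset_eq finite_words)
  with inj show ?thesis by (simp add: bij_betw_def)
qed

lemma gray_inv_in_words: "x \<in> words n \<Longrightarrow> gray_inv n x \<in> words n"
  unfolding gray_inv_def words_def[symmetric]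
  using bij_betw_gray by (metis bij_betw_def the_inv_into_into order_refl)

lemma gray_gray_inv: "x \<in> words n \<Longrightarrow> gray (gray_inv n x) = x"
  unfolding gray_inv_def words_def[symmetric]
  using bij_betw_gray by (metis bij_betw_def f_the_inv_into_f)

lemma gray_inv_gray: "u \<in> words n \<Longrightarrow> gray_inv n (gray u) = u"
  unfolding gray_inv_def words_def[symmetric]
  using bij_betw_gray by (metis bij_betw_def the_inv_into_f_f)

lemma gray_le_refl: "gray_le n x x"
  by (simp add: gray_le_def lexordp_eq_refl)

lemma gray_le_trans: "gray_le n x y \<Longrightarrow> gray_le n y z \<Longrightarrow> gray_le n x z"
  unfolding gray_le_def using lexordp_eq_trans by blast

lemma gray_le_linear: "gray_le n x y \<or> gray_le n y x"
  unfolding gray_le_def using lexordp_eq_linear by blast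

lemma gray_le_antisym:
  "x \<in> words n \<Longrightarrow> y \<in> words n \<Longrightarrow> gray_le n x y \<Longrightarrow> gray_le n y x \<Longrightarrow> x = y"
  unfolding gray_le_def using lexordp_eq_antisym by (metis gray_gray_inv)

lemma gray_lt_iff_not_le: "gray_lt n x y \<longleftrightarrow> \<not> gray_le n y x"
  unfolding gray_lt_def gray_le_def
  by (metis lexordp_conv_lexordp_eq lexordp_eq_linear)

lemma gray_le_iff_lt_or_eq:
  "x \<in> words n \<Longrightarrow> y \<in> words n \<Longrightarrow> gray_le n x y \<longleftrightarrow> gray_lt n x y \<or> x = y"
  by (metis gray_lt_iff_not_le gray_le_antisym gray_le_refl gray_le_linear)

lemma lexordp_eq_replicate_False: "length z = k \<Longrightarrow> ord_class.lexordp_eq (replicate k False) z"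
  by (induction k arbitrary: z) (auto simp: length_Suc_conv)

lemma not_lexordp_replicate_True: "length z = k \<Longrightarrow> \<not> ord_class.lexordp (replicate k True) z"
  by (induction k arbitrary: z) (auto simp: length_Suc_conv)

lemma lexordp_eq_replicate_True: "length z = k \<Longrightarrow> ord_class.lexordp_eq z (replicate k True)"
  by (induction k arbitrary: z) (auto simp: length_Suc_conv)

lemma lexordp_imp_lexordp_eq_next:
  assumes "length z = length w + Suc k" and "ord_class.lexordp (w @ False # replicate k True) z"
  shows "ord_class.lexordp_eq (w @ True # replicate k False) z"
  using assms
proof (induction w arbitrary: z)
  case Nil
  then obtain c z' where "z = c # z'" "length z' = k" by (auto simp: length_Suc_conv)
  with Nil show ?case
    using lexordp_eq_replicate_False not_lexordp_replicate_True by (cases c) auto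
next
  case (Cons c w)
  then obtain d z' where "z = d # z'" "length z' = length w + Suc k"
    by (auto simp: length_Suc_conv)
  with Cons show ?case by (auto simp: lexordp_into_lexordp_eq)
qed

lemma False_in_gray_inv_if_not_max:
  assumes x: "x \<in> words n" and not_max: "\<not> gray_is_max n x"
  shows "False \<in> set (gray_inv n x)"
proof (rule ccontr)
  assume "False \<notin> set (gray_inv n x)"
  then have "y = True" if "y \<in> set (gray_inv n x)" for y
    using that by (cases y) auto
  then have top: "gray_inv n x = replicate n True"
    using gray_inv_in_words[OF x] by (intro replicate_eqI) (auto simp: words_def)
  have "gray_is_max n x"
    unfolding gray_is_max_def gray_le_def top
  proof (intro allI impI)
    fix y :: "bool list" assume "length y = n"
    then show "ord_class.lexordp_eq (gray_inv n y) (replicate n True)"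
      using gray_inv_in_words[of y n] by (intro lexordp_eq_replicate_True) (simp add: words_def)
  qed
  with not_max show False by simp
qed

lemma gray_succ_eq:
  assumes x: "x \<in> words n" and u: "gray_inv n x = w @ False # replicate k True"
  shows "gray_succ n x = gray (w @ True # replicate k False)"
proof -
  define v where "v = w @ True # replicate k False"
  have v: "v \<in> words n" and gv: "gray v \<in> words n"
    using gray_inv_in_words[OF x] u by (simp_all add: v_def words_def)
  have next_le: "gray_le n (gray v) z" if "z \<in> words n" and "gray_lt n x z" for z
    using that gray_inv_in_words[OF \<open>z \<in> words n\<close>] gray_inv_in_words[OF x] u
    unfolding gray_le_def gray_lt_def gray_inv_gray[OF v] unfolding v_def
    by (intro lexordp_imp_lexordp_eq_next) (auto simp: words_def)
  have lt: "gray_lt n x (gray v)"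
    unfolding gray_lt_def gray_inv_gray[OF v] u unfolding v_def
    by (rule lexordp_append_left_rightI) simp
  show ?thesis
    unfolding gray_succ_def v_def[symmetric]
  proof (rule the_equality)
    show "length (gray v) = n \<and> gray_lt n x (gray v) \<and>
        (\<forall>z. length z = n \<and> gray_lt n x z \<longrightarrow> gray_le n (gray v) z)"
      using gv lt next_le by (auto simp: words_def)
  next
    fix y assume y: "length y = n \<and> gray_lt n x y \<and>
        (\<forall>z. length z = n \<and> gray_lt n x z \<longrightarrow> gray_le n y z)"
    then have "gray_le n y (gray v)" and "gray_le n (gray v) y"
      using gv lt next_le by (auto simp: words_def)
    with y gv show "y = gray v" by (auto simp: words_def intro: gray_le_antisym)
  qed
qed

lemma gray_succ_flips_one_bit:
  assumes x: "x \<in> words n" and not_max: "\<not> gray_is_max n x"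
  obtains s d t where "x = s @ d # t" and "gray_succ n x = s @ (\<not> d) # t"
proof -
  obtain w t where u: "gray_inv n x = w @ False # t" and "False \<notin> set t"
    using split_list_last[OF False_in_gray_inv_if_not_max[OF x not_max]] by blast
  then have "y = True" if "y \<in> set t" for y
    using that by (cases y) auto
  then obtain k where t: "t = replicate k True"
    using replicate_eqI by metis
  define d where "d = last (False # w)"
  have "x = gray (w @ False # t)"
    using gray_gray_inv[OF x] u by simp
  also have "\<dots> = gray_from False w @ d # gray_from False t"
    unfolding gray_eq_gray_from gray_from_append d_def[symmetric] by (cases d) simp_all
  finally have "x = gray_from False w @ d # gray_from False t" .
  moreover have "gray_succ n x = gray_from False w @ (\<not> d) # gray_from False t"
    using gray_succ_eq[OF x u[unfolded t]] gray_from_replicate_swap[of k] t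
    unfolding gray_eq_gray_from gray_from_append d_def[symmetric]
    by (cases d) simp_all
  ultimately show thesis by (rule that)
qed

section \<open>Word probabilities\<close>

lemma prob_Nil [simp]: "prob p [] = 1"
  by (simp add: prob_def)

lemma prob_Cons: "prob p (c # xs) = p c * prob p xs"
  by (simp add: prob_def)

lemma prob_append: "prob p (xs @ ys) = prob p xs * prob p ys"
  by (simp add: prob_def)

lemma prob_pos: "(\<And>c. 0 < p c) \<Longrightarrow> 0 < prob p xs"
  by (induction xs) (auto simp: prob_Cons)

lemma rho_ge_1: "(\<And>c. 0 < p c) \<Longrightarrow> 1 \<le> rho p"
  unfolding rho_def by (smt (verit) le_divide_eq_1_pos)

lemma prob_flip_le:
  assumes pos: "\<And>c. 0 < p c"
  shows "prob p (s @ (\<not> d) # t) \<le> rho p * prob p (s @ d # t)"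
proof -
  have "p (\<not> d) / p d \<le> rho p"
    unfolding rho_def by (cases d) auto
  then have "p (\<not> d) \<le> rho p * p d"
    using pos[of d] by (simp add: divide_le_eq)
  then show ?thesis
    using prob_pos[of p s, OF pos] prob_pos[of p t, OF pos]
    unfolding prob_append prob_Cons by (simp add: mult_left_mono mult_right_mono ac_simps)
qed

lemma prob_gray_succ_le:
  assumes "x \<in> words n" and "\<not> gray_is_max n x" and "\<And>c. 0 < p c"
  shows "prob p (gray_succ n x) \<le> rho p * prob p x"
  using assms(1,2) by (rule gray_succ_flips_one_bit) (use prob_flip_le[OF assms(3)] in simp)

context
  fixes p :: "bool \<Rightarrow> real"
  assumes pos: "\<And>c. 0 < p c" and sum_one: "p False + p True = 1"
begin

lemma sum_prob_words: "sum (prob p) (words n) = 1"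
proof (induction n)
  case 0
  have "words 0 = {[]}" by (auto simp: words_def)
  then show ?case by simp
next
  case (Suc n)
  show ?case
    unfolding sum_words_Suc prob_Cons sum_distrib_left[symmetric] Suc using sum_one by simp
qed

lemma sum_self_information_words:
  "(\<Sum>x\<in>words n. prob p x * - log 2 (prob p x)) = real n * entropy p"
proof (induction n)
  case 0
  have "words 0 = {[]}" by (auto simp: words_def)
  then show ?case by simp
next
  case (Suc n)
  have split: "prob p (c # xs) * - log 2 (prob p (c # xs))
      = p c * - log 2 (p c) * prob p xs + p c * (prob p xs * - log 2 (prob p xs))" for c xs
    using pos[of c] prob_pos[of p xs, OF pos] by (simp add: prob_Cons log_mult algebra_simps)
  have "(\<Sum>x\<in>words (Suc n). prob p x * - log 2 (prob p x))
      = entropy p + (p False + p True) * (real n * entropy p)"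
    unfolding sum_words_Suc split sum.distrib sum_distrib_left[symmetric] sum_prob_words Suc
    by (simp add: entropy_def algebra_simps)
  then show ?case unfolding sum_one by (simp add: algebra_simps)
qed

lemma cdf_eq_cdf_prev_plus_prob:
  assumes "x \<in> words n"
  shows "cdf p n x = cdf_prev p n x + prob p x"
proof -
  have "{c. length c = n \<and> gray_le n c x} = insert x {c. length c = n \<and> gray_lt n c x}"
    using assms gray_le_iff_lt_or_eq by (auto simp: words_def)
  moreover have "finite {c. length c = n \<and> gray_lt n c x}"
    using finite_words[of n] by (auto simp: words_def elim: finite_subset[rotated])
  ultimately show ?thesis
    unfolding cdf_def cdf_prev_def by (simp add: gray_lt_iff_not_le gray_le_refl)
qed

lemma cdf_le_cdf_prev:
  assumes "gray_lt n x y"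
  shows "cdf p n x \<le> cdf_prev p n y"
  unfolding cdf_def cdf_prev_def
proof (rule sum_mono2)
  show "finite {c. length c = n \<and> gray_lt n c y}"
    using finite_words[of n] by (auto simp: words_def elim: finite_subset[rotated])
  show "{c. length c = n \<and> gray_le n c x} \<subseteq> {c. length c = n \<and> gray_lt n c y}"
    using assms gray_le_trans by (auto simp: gray_lt_iff_not_le)
qed (simp add: less_imp_le prob_pos pos)

lemma cdf_le_1: "cdf p n x \<le> 1"
proof -
  have "cdf p n x \<le> sum (prob p) (words n)"
    unfolding cdf_def
    by (rule sum_mono2) (use finite_words[of n] in \<open>auto simp: words_def less_imp_le prob_pos pos\<close>)
  then show ?thesis using sum_prob_words by simp
qed

lemma cdf_prev_nonneg: "0 \<le> cdf_prev p n x"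
  unfolding cdf_prev_def by (rule sum_nonneg) (simp add: less_imp_le prob_pos pos)

lemma sum_floor_neg_log_prob_gt:
  assumes "0 < \<kappa>"
  shows "real n * entropy p - 1 - log 2 \<kappa> < (\<Sum>x\<in>words n. \<lfloor>- log 2 (\<kappa> * prob p x)\<rfloor> * prob p x)"
proof -
  have "(- log 2 (\<kappa> * prob p x) - 1) * prob p x < \<lfloor>- log 2 (\<kappa> * prob p x)\<rfloor> * prob p x" for x
    using prob_pos[of p x, OF pos] by (intro mult_strict_right_mono) linarith+
  then have "(\<Sum>x\<in>words n. (- log 2 (\<kappa> * prob p x) - 1) * prob p x)
      < (\<Sum>x\<in>words n. \<lfloor>- log 2 (\<kappa> * prob p x)\<rfloor> * prob p x)"
    using words_nonempty by (intro sum_strict_mono) auto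
  moreover have split: "(- log 2 (\<kappa> * prob p x) - 1) * prob p x
      = prob p x * - log 2 (prob p x) - (1 + log 2 \<kappa>) * prob p x" for x
    using assms prob_pos[of p x, OF pos] by (simp add: log_mult algebra_simps)
  have "(\<Sum>x\<in>words n. (- log 2 (\<kappa> * prob p x) - 1) * prob p x)
      = real n * entropy p - 1 - log 2 \<kappa>"
    unfolding split sum_subtractf sum_distrib_left[symmetric] sum_self_information_words
      sum_prob_words by simp
  ultimately show ?thesis by simp
qed

end

section \<open>The decoder on a cell\<close>

definition gray_least :: "nat \<Rightarrow> bool list set \<Rightarrow> bool list" where
  "gray_least n A = (THE y. y \<in> A \<and> (\<forall>z\<in>A. gray_le n y z))"

lemma gray_least_eqI:
  assumes "A \<subseteq> words n" and "x \<in> A" and "\<And>z. z \<in> A \<Longrightarrow> gray_le n x z"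
  shows "gray_least n A = x"
  unfolding gray_least_def using assms by (auto intro!: the_equality gray_le_antisym)

lemma xhat_eq_gray_least: "xhat p n a b r = gray_least n {y \<in> words n. r < FI p n a b y}"
  unfolding xhat_def gray_least_def words_def by simp

lemma finite_range_xtilde: "finite (range (xtilde p n a b))"
proof -
  let ?X = "gray_least n ` Pow (words n)"
  have "range (xtilde p n a b) \<subseteq> ?X \<union> gray_succ n ` ?X"
    unfolding xtilde_def Let_def xhat_eq_gray_least by auto
  then show ?thesis by (rule finite_subset) simp
qed

text \<open>The decoder sees \<open>r\<close> only through the finite set of words \<open>y\<close> with \<open>r < F\<^sub>I(y)\<close>, and
  through comparisons of \<open>r\<close> with fixed thresholds once that set is known.\<close>

lemma borel_measurable_lam_xtilde:
  "(\<lambda>r. real_of_int (lam p a b (xtilde p n a b r))) \<in> borel_measurable borel"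
proof -
  define Q where "Q r = {y \<in> words n. r < FI p n a b y}" for r
  define dec where "dec A r = real_of_int (lam p a b (let x = gray_least n A in
      if Fbar p n a b x \<le> r \<and> \<not> gray_is_max n x then gray_succ n x else x))" for A r
  have "Q -` {A} = {r. \<forall>y\<in>words n. (r < FI p n a b y) \<longleftrightarrow> y \<in> A}" if "A \<subseteq> words n" for A
    using that unfolding Q_def by auto
  then have "Q \<in> measurable borel (count_space (Pow (words n)))"
    by (subst measurable_count_space_eq_countable) (auto simp: Q_def intro: countable_finite)
  moreover have "dec A \<in> borel_measurable borel" for A
    unfolding dec_def Let_def by measurable
  ultimately have "(\<lambda>r. dec (Q r) r) \<in> borel_measurable borel"
    by (intro measurable_compose_countable'[where f = dec and g = Q]) (auto intro: countable_finite)
  then show ?thesis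
    unfolding xtilde_def xhat_eq_gray_least dec_def Q_def .
qed

definition cell :: "(bool \<Rightarrow> real) \<Rightarrow> nat \<Rightarrow> real \<Rightarrow> real \<Rightarrow> bool list \<Rightarrow> real set" where
  "cell p n a b x = {FI_prev p n a b x ..< FI p n a b x}"

context
  fixes p :: "bool \<Rightarrow> real" and n :: nat and a b :: real
  assumes pos: "\<And>c. 0 < p c" and sum_one: "p False + p True = 1" and a_lt_b: "a < b"
begin

lemma cell_borel: "cell p n a b x \<in> sets borel"
  by (simp add: cell_def)

lemma FI_minus_FI_prev: "x \<in> words n \<Longrightarrow> FI p n a b x - FI_prev p n a b x = (b - a) * prob p x"
  unfolding FI_def FI_prev_def cdf_eq_cdf_prev_plus_prob[OF pos sum_one] by (simp add: algebra_simps)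

lemma FI_le_FI_prev: "gray_lt n z x \<Longrightarrow> FI p n a b z \<le> FI_prev p n a b x"
  unfolding FI_def FI_prev_def using cdf_le_cdf_prev[OF pos sum_one] a_lt_b by simp

lemma cell_subset: "cell p n a b x \<subseteq> {a..<b}"
proof -
  have "a \<le> FI_prev p n a b x"
    unfolding FI_prev_def using cdf_prev_nonneg[OF pos sum_one, of n x] a_lt_b by simp
  moreover have "(b - a) * cdf p n x \<le> (b - a) * 1"
    using cdf_le_1[OF pos sum_one, of n x] a_lt_b by (intro mult_left_mono) auto
  then have "FI p n a b x \<le> b" unfolding FI_def by simp
  ultimately show ?thesis unfolding cell_def by auto
qed

lemma disjoint_family_on_cell: "disjoint_family_on (cell p n a b) (words n)"
  unfolding disjoint_family_on_def
proof (intro ballI impI)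
  fix x y assume "x \<in> words n" "y \<in> words n" "x \<noteq> y"
  then have "gray_lt n x y \<or> gray_lt n y x"
    using gray_le_iff_lt_or_eq gray_le_linear by blast
  then show "cell p n a b x \<inter> cell p n a b y = {}"
    using FI_le_FI_prev unfolding cell_def by fastforce
qed

lemma xhat_on_cell:
  assumes x: "x \<in> words n" and r: "r \<in> cell p n a b x"
  shows "xhat p n a b r = x"
  unfolding xhat_eq_gray_least
proof (rule gray_least_eqI)
  show "x \<in> {y \<in> words n. r < FI p n a b y}" using x r by (simp add: cell_def)
next
  fix z assume z: "z \<in> {y \<in> words n. r < FI p n a b y}"
  show "gray_le n x z"
  proof (rule ccontr)
    assume "\<not> gray_le n x z"
    then have "FI p n a b z \<le> FI_prev p n a b x"
      by (intro FI_le_FI_prev) (simp add: gray_lt_iff_not_le)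
    with r z show False by (simp add: cell_def)
  qed
qed auto

lemma lam_xtilde_on_cell_ge:
  assumes x: "x \<in> words n" and r: "r \<in> cell p n a b x"
  shows "\<lfloor>- log 2 (rho p ^ 2 * (b - a) * prob p x)\<rfloor> \<le> lam p a b (xtilde p n a b r)"
proof -
  define y where "y = xtilde p n a b r"
  have rho: "1 \<le> rho p" using rho_ge_1[OF pos] .
  have "y = x \<or> (\<not> gray_is_max n x \<and> y = gray_succ n x)"
    unfolding y_def xtilde_def xhat_on_cell[OF x r] by auto
  then have "prob p y \<le> rho p * prob p x"
    using prob_gray_succ_le[OF x _ pos] rho prob_pos[of p x, OF pos]
    by (auto intro: mult_right_mono[of 1, simplified])
  then have "rho p * (b - a) * prob p y \<le> rho p ^ 2 * (b - a) * prob p x"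
    using rho a_lt_b by (simp add: power2_eq_square mult.assoc mult_left_mono)
  then have "log 2 (rho p * (b - a) * prob p y) \<le> log 2 (rho p ^ 2 * (b - a) * prob p x)"
    using rho a_lt_b prob_pos[of p y, OF pos] prob_pos[of p x, OF pos]
    by (subst log_le_cancel_iff) auto
  then show ?thesis unfolding y_def[symmetric] lam_def by (intro floor_mono) simp
qed

lemma measure_uniform_cell:
  assumes "x \<in> words n"
  shows "measure (uniform_measure lborel {a..<b}) (cell p n a b x) = prob p x"
proof -
  have "measure (uniform_measure lborel {a..<b}) (cell p n a b x)
      = measure lborel ({a..<b} \<inter> cell p n a b x) / measure lborel {a..<b}"
    using a_lt_b by (intro measure_uniform_measure) (auto simp: cell_def)
  also have "{a..<b} \<inter> cell p n a b x = cell p n a b x"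
    using cell_subset by blast
  also have "measure lborel (cell p n a b x) = (b - a) * prob p x"
  proof -
    have "0 \<le> (b - a) * prob p x" using prob_pos[of p x, OF pos] a_lt_b by simp
    then have "FI_prev p n a b x \<le> FI p n a b x" using FI_minus_FI_prev[OF assms] by linarith
    then show ?thesis using FI_minus_FI_prev[OF assms] unfolding cell_def measure_def by simp
  qed
  also have "measure lborel {a..<b} = b - a"
    using a_lt_b unfolding measure_def by simp
  finally show ?thesis using a_lt_b by simp
qed

lemma AE_in_cell:
  "AE r in uniform_measure lborel {a..<b}. \<exists>x\<in>words n. r \<in> cell p n a b x"
proof -
  let ?U = "uniform_measure lborel {a..<b}"
  have U: "prob_space ?U" using a_lt_b by (intro prob_space_uniform_measure) auto
  have "measure ?U (\<Union>x\<in>words n. cell p n a b x) = (\<Sum>x\<in>words n. measure ?U (cell p n a b x))"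
    using disjoint_family_on_cell cell_borel
    by (intro finite_measure.finite_measure_finite_Union prob_space.finite_measure U) auto
  also have "\<dots> = 1"
    using measure_uniform_cell sum_prob_words[OF pos sum_one] by simp
  finally show ?thesis
    by (intro prob_space.AE_prob_1[OF U, THEN eventually_mono]) auto
qed

lemma integral_lam_xtilde_ge:
  "(\<Sum>x\<in>words n. \<lfloor>- log 2 (rho p ^ 2 * (b - a) * prob p x)\<rfloor> * prob p x)
    \<le> (\<integral>r. real_of_int (lam p a b (xtilde p n a b r)) \<partial>uniform_measure lborel {a..<b})"
proof -
  let ?U = "uniform_measure lborel {a..<b}"
  define L where "L x = real_of_int \<lfloor>- log 2 (rho p ^ 2 * (b - a) * prob p x)\<rfloor>" for x
  define f where "f r = real_of_int (lam p a b (xtilde p n a b r))" for r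
  have U: "finite_measure ?U"
    using a_lt_b by (intro prob_space.finite_measure prob_space_uniform_measure) auto
  have indicator_integrable: "integrable ?U (indicator (cell p n a b x) :: real \<Rightarrow> real)" for x
    using finite_measure.emeasure_finite[OF U, of "cell p n a b x"] cell_borel
    by (intro integrable_real_indicator) (auto simp: less_top)
  have "range f = (\<lambda>x. real_of_int (lam p a b x)) ` range (xtilde p n a b)"
    unfolding f_def image_image ..
  then have "finite (range f)"
    using finite_range_xtilde by simp
  then have "integrable ?U f"
    using borel_measurable_lam_xtilde unfolding f_def
    by (intro finite_measure.integrable_const_bound[OF U, where B = "Max (abs ` range f)"])
      (auto intro: Max_ge simp: f_def)
  moreover have "AE r in ?U. (\<Sum>x\<in>words n. L x * indicator (cell p n a b x) r) \<le> f r"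
    using AE_in_cell
  proof (rule eventually_mono)
    fix r assume "\<exists>x\<in>words n. r \<in> cell p n a b x"
    then obtain x where x: "x \<in> words n" and r: "r \<in> cell p n a b x" by blast
    have "r \<notin> cell p n a b y" if "y \<in> words n" "y \<noteq> x" for y
      using disjoint_family_onD[OF disjoint_family_on_cell] x r that by blast
    then have "(\<Sum>y\<in>words n. L y * indicator (cell p n a b y) r)
        = (\<Sum>y\<in>words n. if y = x then L y else 0)"
      using r by (intro sum.cong) auto
    also have "\<dots> = L x"
      using x by simp
    also have "\<dots> \<le> f r"
      unfolding L_def f_def using lam_xtilde_on_cell_ge[OF x r] by simp
    finally show "(\<Sum>y\<in>words n. L y * indicator (cell p n a b y) r) \<le> f r" .
  qed
  moreover have "integrable ?U (\<lambda>r. \<Sum>x\<in>words n. L x * indicator (cell p n a b x) r)"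
    using indicator_integrable by (intro Bochner_Integration.integrable_sum integrable_mult_right)
  ultimately have "integral\<^sup>L ?U (\<lambda>r. \<Sum>x\<in>words n. L x * indicator (cell p n a b x) r)
      \<le> integral\<^sup>L ?U f"
    by (intro integral_mono_AE)
  also have "integral\<^sup>L ?U (\<lambda>r. \<Sum>x\<in>words n. L x * indicator (cell p n a b x) r)
      = (\<Sum>x\<in>words n. L x * prob p x)"
    using indicator_integrable measure_uniform_cell by (subst Bochner_Integration.integral_sum) auto
  finally show ?thesis unfolding L_def f_def .
qed

end

theorem theorem2:
  fixes p :: "bool \<Rightarrow> real" and n :: nat and a b :: real
  assumes "0 < p False" and "0 < p True" and "p False + p True = 1"
    and "p False \<noteq> p True"
    and "0 \<le> a" and "a < b" and "b \<le> 1"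
  shows "(\<integral>r. real_of_int (lam p a b (xtilde p n a b r)) \<partial>(uniform_measure lborel {a..<b}))
           > real n * entropy p - 1 - 2 * log 2 (rho p)"
proof -
  have pos: "0 < p c" for c
    using assms(1,2) by (cases c) auto
  have rho: "1 \<le> rho p"
    using rho_ge_1[OF pos] .
  have "log 2 (rho p ^ 2 * (b - a)) = 2 * log 2 (rho p) + log 2 (b - a)"
    using rho assms(6) by (simp add: log_mult log_nat_power)
  moreover have "log 2 (b - a) \<le> 0"
    using assms(5-7) by simp
  ultimately have "real n * entropy p - 1 - 2 * log 2 (rho p)
      \<le> real n * entropy p - 1 - log 2 (rho p ^ 2 * (b - a))"
    by linarith
  also have "\<dots> < (\<Sum>x\<in>words n. \<lfloor>- log 2 (rho p ^ 2 * (b - a) * prob p x)\<rfloor> * prob p x)"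
    using rho assms(6) by (intro sum_floor_neg_log_prob_gt[OF pos assms(3)]) simp
  also have "\<dots> \<le> (\<integral>r. real_of_int (lam p a b (xtilde p n a b r)) \<partial>uniform_measure lborel {a..<b})"
    using integral_lam_xtilde_ge[OF pos assms(3,6)] .
  finally show ?thesis .
qed

end
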